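(* Let $\Sigma$ be a finite alphabet, let $\mathcal D$ be a probability distribution over $\Sigma^\ast$, let $L_{\mathcal R}\subseteq\Sigma^\ast$ be the language of an RNN acceptor $\mathcal R$ (accessible only through membership queries $u\mapsto [u\in L_{\mathcal R}]$), let $\psi$ be an LTL formula (the query), and let $\varepsilon,\delta\in(0,1)$. Run the procedure LEXR described in the context on these inputs. Then the probability (over the random test words drawn by the verifier) that LEXR terminates and returns an LTL formula $\varphi$ which is not an $\varepsilon$-explanation for $\mathcal R$ and $\psi$ is at most $\delta$; i.e., whenever LEXR returns a formula $\varphi$, it is an $\varepsilon$-explanation, meaning $\mathbf P_{\mathcal D}\big(L(\varphi)\oplus(L_{\mathcal R}\cap L(\psi))\big)<\varepsilon$, with probability at least $1-\delta$.
   Context: Words are finite sequences over the finite alphabet $\Sigma$; $\Sigma^\ast$ is the set of all finite words, $\lambda$ the empty word. An RNN acceptor $\mathcal R$ is given abstractly by a state-update map $g:\mathbb R^{d_s}\times\Sigma\to\mathbb R^{d_s}$, an initial state $s_I$, and a classifier $f:\mathbb R^{d_s}\to\{0,1\}$; extending $g$ to words by $g^\ast(s,\lambda)=s$, $g^\ast(s,ua)=g(g^\ast(s,u),a)$, its language is $L(\mathcal R)=\{u\in\Sigma^\ast: f(g^\ast(s_I,u))=1\}$. LTL formulas are generated by $\varphi::= a\in\Sigma\mid\neg\varphi\mid\varphi\vee\varphi\mid \mathbf X\varphi\mid \varphi\,\mathbf U\,\varphi$ (with the usual abbreviations $\top,\bot,\wedge,\to,\mathbf F\varphi=\top\mathbf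 U\varphi,\mathbf G\varphi=\neg\mathbf F\neg\varphi$), interpreted over finite words $u=a_1\dots a_n$: $(u,i)\models a$ iff $a_i=a$; negation and disjunction as usual; $(u,i)\models\mathbf X\varphi$ iff $i<n$ and $(u,i+1)\models\varphi$; $(u,i)\models\varphi_1\mathbf U\varphi_2$ iff there is $j\in\{i,\dots,n\}$ with $(u,j)\models\varphi_2$ and $(u,k)\models\varphi_1$ for all $i\le k<j$. $u\models\varphi$ means $(u,1)\models\varphi$, and $L(\varphi)=\{u: u\models\varphi\}$. $\oplus$ denotes symmetric difference of languages. A formula $\varphi$ is an $\varepsilon$-explanation for $\mathcal R$ and $\psi$ if $\mathbf P_{\mathcal D}(\{u\in\Sigma^\ast: u\in L(\varphi)\oplus(L(\mathcal R)\cap L(\psi))\})<\varepsilon$. Procedure LEXR: maintain a finite sample $\mathcal S\subset\Sigma^\ast\times\{0,1\}$, initially empty. In iteration $i=1,2,\dots$: (1) the learner outputs an LTL formula $\varphi$ consistent with $\mathcal S$ (every $(u,1)\in\mathcal S$ satisfies $u\models\varphi$ and every $(u,0)\in\mathcal S$ satisfies $u\not\models\varphi$; the paper's learner picks one of minimal size via SAT solving); (2) the verifier draws a test suite $T_i$ of $r_i=\lceil\frac1\varepsilon(i\ln 2-\ln\delta)\rceil$ words independently according to $\mathcal D$ and checks whether some $u\in T_i$ lies in $L(\varphi)\oplus(L(\mathcal R)\cap L(\psi))$ (a counterexample); (3) if there is no counterexample, LEXR terminates and returns $\varphi$; otherwise the counterexample(s) $u$ are added to $\mathcal S$ with label $1$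 if $u\in L(\mathcal R)\cap L(\psi)$ and label $0$ otherwise, and the next iteration starts. LEXR need not terminate. *)

theory Defs
  imports "HOL-Probability.Probability"
begin

datatype 'a ltl = Atom 'a | Neg "'a ltl" | Or "'a ltl" "'a ltl"
  | Next "'a ltl" | Until "'a ltl" "'a ltl"

text \<open>Positions are 0-indexed: position i here is position i+1 of the paper.\<close>
fun sat :: "'a list \<Rightarrow> nat \<Rightarrow> 'a ltl \<Rightarrow> bool" where
  "sat u i (Atom a) = (i < length u \<and> u ! i = a)"
| "sat u i (Neg \<phi>) = (\<not> sat u i \<phi>)"
| "sat u i (Or \<phi> \<theta>) = (sat u i \<phi> \<or> sat u i \<theta>)"
| "sat u i (Next \<phi>) = (Suc i < length u \<and> sat u (Suc i) \<phi>)"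
| "sat u i (Until \<phi> \<theta>) =
     (\<exists>j. i \<le> j \<and> j < length u \<and> sat u j \<theta> \<and> (\<forall>k. i \<le> k \<and> k < j \<longrightarrow> sat u k \<phi>))"

definition models :: "'a list \<Rightarrow> 'a ltl \<Rightarrow> bool" where
  "models u \<phi> = sat u 0 \<phi>"

definition lang :: "'a ltl \<Rightarrow> 'a list set" where
  "lang \<phi> = {u. models u \<phi>}"

text \<open>State space \<open>real^'d\<close> (dimension d_s = CARD('d)); g^* is a left fold.\<close>
definition rnn_lang ::
  "(real^'d \<Rightarrow> 'a \<Rightarrow> real^'d) \<Rightarrow> real^'d \<Rightarrow> (real^'d \<Rightarrow> bool) \<Rightarrow> 'a list set" where
  "rnn_lang g sI f = {u. f (foldl g sI u)}"

definition symdiff :: "'b set \<Rightarrow> 'b set \<Rightarrow> 'b set" where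
  "symdiff A B = (A - B) \<union> (B - A)"

definition is_eps_explanation ::
  "'a list pmf \<Rightarrow> real \<Rightarrow> 'a list set \<Rightarrow> 'a ltl \<Rightarrow> 'a ltl \<Rightarrow> bool" where
  "is_eps_explanation D eps LR \<psi> \<phi> =
     (measure_pmf.prob D (symdiff (lang \<phi>) (LR \<inter> lang \<psi>)) < eps)"

definition consistent :: "'a ltl \<Rightarrow> ('a list \<times> bool) set \<Rightarrow> bool" where
  "consistent \<phi> S = (\<forall>(u, b) \<in> S. models u \<phi> = b)"

text \<open>Size r_i of the test suite of iteration i (1-indexed as in the paper).\<close>
definition test_size :: "real \<Rightarrow> real \<Rightarrow> nat \<Rightarrow> nat" where
  "test_size eps delta i = nat \<lceil>(1 / eps) * (real i * ln 2 - ln delta)\<rceil>"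

text \<open>All test words are drawn i.i.d. from D; we read them off consecutively from a
  single random stream \<open>\<omega>\<close>. Iterations are 0-indexed here (iteration k is paper's k+1).\<close>
definition suite_offset :: "real \<Rightarrow> real \<Rightarrow> nat \<Rightarrow> nat" where
  "suite_offset eps delta k = (\<Sum>j<k. test_size eps delta (Suc j))"

definition test_suite :: "real \<Rightarrow> real \<Rightarrow> 'b stream \<Rightarrow> nat \<Rightarrow> 'b list" where
  "test_suite eps delta \<omega> k =
     stake (test_size eps delta (Suc k)) (sdrop (suite_offset eps delta k) \<omega>)"

definition is_cex :: "'a list set \<Rightarrow> 'a ltl \<Rightarrow> 'a list \<Rightarrow> bool" where
  "is_cex target \<phi> u = (u \<in> symdiff (lang \<phi>) target)"

fun lexr_sample ::
  "(('a list \<times> bool) set \<Rightarrow> 'a ltl) \<Rightarrow> 'a list set \<Rightarrow> real \<Rightarrow> real \<Rightarrow> 'a list stream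
     \<Rightarrow> nat \<Rightarrow> ('a list \<times> bool) set" where
  "lexr_sample learner target eps delta \<omega> 0 = {}"
| "lexr_sample learner target eps delta \<omega> (Suc k) =
     lexr_sample learner target eps delta \<omega> k \<union>
     {(u, u \<in> target) | u. u \<in> set (test_suite eps delta \<omega> k) \<and>
        is_cex target (learner (lexr_sample learner target eps delta \<omega> k)) u}"

definition lexr_hyp where
  "lexr_hyp learner target eps delta \<omega> k = learner (lexr_sample learner target eps delta \<omega> k)"

definition lexr_has_cex where
  "lexr_has_cex learner target eps delta \<omega> k =
     (\<exists>u \<in> set (test_suite eps delta \<omega> k).
        is_cex target (lexr_hyp learner target eps delta \<omega> k) u)"

definition lexr_returns where
  "lexr_returns learner target eps delta \<omega> \<phi> =
     (\<exists>k. (\<forall>j<k. lexr_has_cex learner target eps delta \<omega> j) \<and>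
          \<not> lexr_has_cex learner target eps delta \<omega> k \<and>
          \<phi> = lexr_hyp learner target eps delta \<omega> k)"

end

theory Submission
  imports Defs
begin

text \<open>Split the bad event according to the iteration \<open>k\<close> at which LEXR stops. The hypothesis
  of iteration \<open>k\<close> is determined by the test words of the earlier iterations, while the words
  of the \<open>k\<close>-th test suite are fresh and independent of them. If that hypothesis has error at
  least \<open>eps\<close>, all of them miss its error region with probability at most
  \<open>(1 - eps)\<^sup>r \<le> exp (- eps r) \<le> delta / 2\<^sup>k\<^sup>+\<^sup>1\<close>, and summing over \<open>k\<close> gives \<open>delta\<close>.\<close>

lemma space_stream_space_pmf [simp]: "space (stream_space (measure_pmf D)) = UNIV"
  by (simp add: space_stream_space)

lemma sets_stream_space_pmf_vimage_stake:
  fixes D :: "'b::countable pmf"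
  shows "stake n -` A \<in> sets (stream_space (measure_pmf D))"
proof -
  have "stake n \<in> measurable (stream_space (measure_pmf D)) (count_space UNIV)"
    using measurable_stake
    by (subst measurable_cong_sets[OF sets_stream_space_cong[OF sets_measure_pmf_count_space] refl])
  from measurable_sets[OF this, of A] show ?thesis by simp
qed

lemma sets_stream_space_pmf_if_determined_by_stake:
  fixes D :: "'b::countable pmf"
  assumes "\<And>\<omega> \<omega>'. stake n \<omega> = stake n \<omega>' \<Longrightarrow> P \<omega> \<longleftrightarrow> P \<omega>'"
  shows "{\<omega>. P \<omega>} \<in> sets (stream_space (measure_pmf D))"
proof -
  have "{\<omega>. P \<omega>} = stake n -` {xs. \<exists>\<omega>. stake n \<omega> = xs \<and> P \<omega>}"
    using assms by blast
  then show ?thesis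
    using sets_stream_space_pmf_vimage_stake by metis
qed

text \<open>Conditioning on the first \<open>n\<close> letters, which are independent of the rest of the stream.\<close>
lemma emeasure_stream_space_pmf_le_if_shifts_le:
  assumes "{\<omega>. P \<omega>} \<in> sets (stream_space (measure_pmf D))"
    and "\<And>xs. length xs = n \<Longrightarrow> emeasure (stream_space (measure_pmf D)) {\<omega>. P (xs @- \<omega>)} \<le> c"
  shows "emeasure (stream_space (measure_pmf D)) {\<omega>. P \<omega>} \<le> c"
  using assms
proof (induction n arbitrary: P)
  case 0
  then show ?case by simp
next
  case (Suc n)
  let ?S = "stream_space (measure_pmf D)"
  have tail: "emeasure ?S {\<omega>. P (t ## \<omega>)} \<le> c" for t
  proof (rule Suc.IH)
    have "(\<lambda>\<omega>. t ## \<omega>) \<in> measurable ?S ?S"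
      by measurable
    from measurable_sets[OF this Suc.prems(1)] show "{\<omega>. P (t ## \<omega>)} \<in> sets ?S"
      by (simp add: vimage_def)
    show "emeasure ?S {\<omega>. P (t ## xs @- \<omega>)} \<le> c" if "length xs = n" for xs
      using Suc.prems(2)[of "t # xs"] that by simp
  qed
  have "emeasure ?S {\<omega>. P \<omega>} = (\<integral>\<^sup>+t. emeasure ?S {\<omega>. P (t ## \<omega>)} \<partial>measure_pmf D)"
    using prob_space.emeasure_stream_space[OF prob_space_measure_pmf Suc.prems(1)] by simp
  also have "\<dots> \<le> (\<integral>\<^sup>+t. c \<partial>measure_pmf D)"
    by (intro nn_integral_mono tail)
  also have "\<dots> = c"
    by simp
  finally show ?case .
qed

lemma emeasure_stream_space_pmf_stake_subset:
  fixes D :: "'b::countable pmf"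
  shows "emeasure (stream_space (measure_pmf D)) {\<omega>. set (stake r \<omega>) \<subseteq> C}
           = emeasure (measure_pmf D) C ^ r"
proof (induction r)
  case 0
  interpret prob_space "stream_space (measure_pmf D)"
    by (rule prob_space.prob_space_stream_space[OF prob_space_measure_pmf])
  show ?case
    using emeasure_space_1 by simp
next
  case (Suc r)
  let ?S = "stream_space (measure_pmf D)"
  have "{\<omega>. set (stake (Suc r) \<omega>) \<subseteq> C} \<in> sets ?S"
    using sets_stream_space_pmf_vimage_stake[of "Suc r" "{xs. set xs \<subseteq> C}" D]
    by (simp add: vimage_def)
  from prob_space.emeasure_stream_space[OF prob_space_measure_pmf this]
  have "emeasure ?S {\<omega>. set (stake (Suc r) \<omega>) \<subseteq> C}
      = (\<integral>\<^sup>+t. emeasure ?S {\<omega>. t \<in> C \<and> set (stake r \<omega>) \<subseteq> C} \<partial>measure_pmf D)"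
    by simp
  also have "\<dots> = (\<integral>\<^sup>+t. emeasure (measure_pmf D) C ^ r * indicator C t \<partial>measure_pmf D)"
    by (rule nn_integral_cong) (auto simp: Suc.IH indicator_def)
  also have "\<dots> = emeasure (measure_pmf D) C ^ Suc r"
    by (subst nn_integral_cmult_indicator) (auto simp: mult.commute)
  finally show ?case .
qed

lemma emeasure_stream_space_pmf_stake_avoids_le:
  fixes D :: "'b::countable pmf"
  assumes "eps \<le> measure_pmf.prob D A"
  shows "emeasure (stream_space (measure_pmf D)) {\<omega>. set (stake r \<omega>) \<inter> A = {}}
           \<le> ennreal ((1 - eps) ^ r)"
proof -
  have "{\<omega>. set (stake r \<omega>) \<inter> A = {}} = {\<omega>. set (stake r \<omega>) \<subseteq> - A}"
    by blast
  moreover have "emeasure (measure_pmf D) (- A) = ennreal (1 - measure_pmf.prob D A)"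
    using measure_pmf.prob_compl[of A D]
    by (simp add: measure_pmf.emeasure_eq_measure Compl_eq_Diff_UNIV)
  moreover have "ennreal (1 - measure_pmf.prob D A) ^ r = ennreal ((1 - measure_pmf.prob D A) ^ r)"
    by (rule ennreal_power) simp
  moreover have "(1 - measure_pmf.prob D A) ^ r \<le> (1 - eps) ^ r"
    using assms by (intro power_mono) simp_all
  ultimately show ?thesis
    by (simp add: emeasure_stream_space_pmf_stake_subset ennreal_leI)
qed

text \<open>The test-suite size \<open>r\<close> is chosen exactly so that \<open>exp (- eps r) \<le> delta / 2\<^sup>i\<close>.\<close>
lemma one_minus_eps_pow_test_size_le:
  fixes eps delta :: real
  assumes "0 < eps" "eps \<le> 1" "0 < delta"
  shows "(1 - eps) ^ test_size eps delta i \<le> delta / 2 ^ i"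
proof -
  define t where "t = real i * ln 2 - ln delta"
  define r where "r = test_size eps delta i"
  have "t / eps \<le> real r"
    unfolding r_def test_size_def t_def by (simp add: real_nat_ceiling_ge)
  then have "t \<le> eps * real r"
    using assms(1) by (simp add: field_simps)
  have "(1 - eps) ^ r \<le> exp (- eps) ^ r"
    using assms by (intro power_mono) (auto intro: order.trans[OF _ exp_ge_add_one_self])
  also have "\<dots> = exp (- (eps * real r))"
    by (simp add: exp_of_nat_mult[symmetric] mult.commute)
  also have "\<dots> \<le> exp (- t)"
    using \<open>t \<le> eps * real r\<close> by simp
  also have "exp (- t) = delta / 2 ^ i"
  proof -
    have "exp (real i * ln 2) = 2 ^ i"
      by (metis exp_ln exp_of_nat_mult zero_less_numeral)
    then show ?thesis
      unfolding t_def using assms by (simp add: exp_diff)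
  qed
  finally show ?thesis
    unfolding r_def .
qed

lemma emeasure_UN_le_geometric:
  assumes "range A \<subseteq> sets M" "0 \<le> c"
    and "\<And>k. emeasure M (A k) \<le> ennreal (c / 2 ^ Suc k)"
  shows "emeasure M (\<Union>k. A k) \<le> ennreal c"
proof -
  have "(\<lambda>k. c / 2 ^ Suc k) sums c"
    using sums_mult[OF power_half_series, of c] by (simp add: power_divide)
  have "emeasure M (\<Union>k. A k) \<le> (\<Sum>k. emeasure M (A k))"
    by (rule emeasure_subadditive_countably) (use assms(1) in auto)
  also have "\<dots> \<le> (\<Sum>k. ennreal (c / 2 ^ Suc k))"
    by (intro suminf_le assms(3)) auto
  also have "\<dots> = ennreal c"
    using \<open>(\<lambda>k. c / 2 ^ Suc k) sums c\<close> assms(2) by (subst suminf_ennreal2) (auto simp: sums_iff)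
  finally show ?thesis .
qed

lemma suite_offset_Suc:
  "suite_offset eps delta (Suc k) = suite_offset eps delta k + test_size eps delta (Suc k)"
  by (simp add: suite_offset_def)

lemma suite_offset_mono: "j \<le> k \<Longrightarrow> suite_offset eps delta j \<le> suite_offset eps delta k"
  unfolding suite_offset_def by (rule sum_mono2) auto

lemma test_suite_shift:
  "length xs = suite_offset eps delta k \<Longrightarrow>
     test_suite eps delta (xs @- \<omega>) k = stake (test_size eps delta (Suc k)) \<omega>"
  by (simp add: test_suite_def sdrop_shift)

lemma test_suite_cong_stake:
  assumes "stake n \<omega> = stake n \<omega>'" "suite_offset eps delta (Suc k) \<le> n"
  shows "test_suite eps delta \<omega> k = test_suite eps delta \<omega>' k"
proof -
  have window: "test_suite eps delta \<sigma> k
      = drop (suite_offset eps delta k) (stake (suite_offset eps delta (Suc k)) \<sigma>)" for \<sigma>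
    by (simp add: test_suite_def drop_stake suite_offset_Suc)
  have "stake (suite_offset eps delta (Suc k)) \<omega> = stake (suite_offset eps delta (Suc k)) \<omega>'"
    by (metis assms min.absorb1 take_stake)
  then show ?thesis
    unfolding window by (rule arg_cong)
qed

lemma lexr_sample_cong_stake:
  assumes "stake n \<omega> = stake n \<omega>'"
  shows "suite_offset eps delta k \<le> n \<Longrightarrow>
    lexr_sample learner target eps delta \<omega> k = lexr_sample learner target eps delta \<omega>' k"
proof (induction k)
  case 0
  then show ?case by simp
next
  case (Suc k)
  then have "suite_offset eps delta k \<le> n"
    using suite_offset_mono[of k "Suc k" eps delta] by linarith
  with Suc.IH test_suite_cong_stake[OF assms Suc.prems] show ?case
    by simp
qed

lemma lexr_hyp_cong_stake:
  "stake n \<omega> = stake n \<omega>' \<Longrightarrow> suite_offset eps delta k \<le> n \<Longrightarrow>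
     lexr_hyp learner target eps delta \<omega> k = lexr_hyp learner target eps delta \<omega>' k"
  unfolding lexr_hyp_def by (metis lexr_sample_cong_stake)

lemma lexr_has_cex_cong_stake:
  assumes "stake n \<omega> = stake n \<omega>'" "suite_offset eps delta (Suc k) \<le> n"
  shows "lexr_has_cex learner target eps delta \<omega> k = lexr_has_cex learner target eps delta \<omega>' k"
proof -
  have "suite_offset eps delta k \<le> n"
    using assms(2) suite_offset_mono[of k "Suc k" eps delta] by linarith
  then show ?thesis
    unfolding lexr_has_cex_def
    using lexr_hyp_cong_stake[OF assms(1)] test_suite_cong_stake[OF assms] by metis
qed

definition lexr_returns_at ::
  "(('a list \<times> bool) set \<Rightarrow> 'a ltl) \<Rightarrow> 'a list set \<Rightarrow> real \<Rightarrow> real \<Rightarrow> 'a list stream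
     \<Rightarrow> nat \<Rightarrow> bool" where
  "lexr_returns_at learner target eps delta \<omega> k \<longleftrightarrow>
     (\<forall>j<k. lexr_has_cex learner target eps delta \<omega> j) \<and>
     \<not> lexr_has_cex learner target eps delta \<omega> k"

lemma lexr_returns_iff:
  "lexr_returns learner target eps delta \<omega> \<phi> \<longleftrightarrow>
     (\<exists>k. lexr_returns_at learner target eps delta \<omega> k \<and> \<phi> = lexr_hyp learner target eps delta \<omega> k)"
  by (auto simp: lexr_returns_def lexr_returns_at_def)

lemma lexr_returns_at_cong_stake:
  assumes "stake n \<omega> = stake n \<omega>'" "suite_offset eps delta (Suc k) \<le> n"
  shows "lexr_returns_at learner target eps delta \<omega> k \<longleftrightarrow>
    lexr_returns_at learner target eps delta \<omega>' k"
proof -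
  have "lexr_has_cex learner target eps delta \<omega> j = lexr_has_cex learner target eps delta \<omega>' j"
    if "j \<le> k" for j
    using assms that suite_offset_mono[of "Suc j" "Suc k" eps delta]
    by (intro lexr_has_cex_cong_stake[OF assms(1)]) simp
  then show ?thesis
    unfolding lexr_returns_at_def by auto
qed

lemma sets_lexr_returns_at:
  fixes D :: "'a::countable list pmf"
  shows "{\<omega>. lexr_returns_at learner target eps delta \<omega> k \<and> Q (lexr_hyp learner target eps delta \<omega> k)}
           \<in> sets (stream_space (measure_pmf D))"
proof (rule sets_stream_space_pmf_if_determined_by_stake)
  let ?n = "suite_offset eps delta (Suc k)"
  fix \<omega> \<omega>' :: "'a list stream"
  assume prefix: "stake ?n \<omega> = stake ?n \<omega>'"
  have "lexr_returns_at learner target eps delta \<omega> k \<longleftrightarrow> lexr_returns_at learner target eps delta \<omega>' k"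
    by (rule lexr_returns_at_cong_stake[OF prefix order.refl])
  moreover have "lexr_hyp learner target eps delta \<omega> k = lexr_hyp learner target eps delta \<omega>' k"
    by (rule lexr_hyp_cong_stake[OF prefix suite_offset_mono]) simp
  ultimately show "(lexr_returns_at learner target eps delta \<omega> k \<and> Q (lexr_hyp learner target eps delta \<omega> k))
    \<longleftrightarrow> (lexr_returns_at learner target eps delta \<omega>' k \<and> Q (lexr_hyp learner target eps delta \<omega>' k))"
    by simp
qed

text \<open>Given the first \<open>suite_offset k\<close> words, the hypothesis of iteration \<open>k\<close> is fixed, and
  iteration \<open>k\<close> accepts it only if none of the fresh test words falls into its error region.\<close>
lemma emeasure_lexr_returns_at_bad_hyp_le:
  fixes D :: "'a::countable list pmf"
  assumes "0 < eps" "eps \<le> 1" "0 < delta"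
  shows "emeasure (stream_space (measure_pmf D))
           {\<omega>. lexr_returns_at learner target eps delta \<omega> k \<and>
               eps \<le> measure_pmf.prob D (symdiff (lang (lexr_hyp learner target eps delta \<omega> k)) target)}
         \<le> ennreal (delta / 2 ^ Suc k)"
proof (rule emeasure_stream_space_pmf_le_if_shifts_le[where n = "suite_offset eps delta k",
                OF sets_lexr_returns_at], goal_cases)
  case (1 xs)
  let ?S = "stream_space (measure_pmf D)"
  let ?n = "suite_offset eps delta k"
  let ?r = "test_size eps delta (Suc k)"
  have prefix: "stake ?n (xs @- \<omega>) = xs" for \<omega>
    using 1 by (simp add: stake_shift)
  define \<phi> where "\<phi> = lexr_hyp learner target eps delta (xs @- sconst undefined) k"
  define A where "A = symdiff (lang \<phi>) target"
  define earlier_cex where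
    "earlier_cex = (\<forall>j<k. lexr_has_cex learner target eps delta (xs @- sconst undefined) j)"
  have hyp: "lexr_hyp learner target eps delta (xs @- \<omega>) k = \<phi>" for \<omega>
    unfolding \<phi>_def by (rule lexr_hyp_cong_stake[of ?n]) (simp_all add: prefix)
  have earlier: "(\<forall>j<k. lexr_has_cex learner target eps delta (xs @- \<omega>) j) \<longleftrightarrow> earlier_cex" for \<omega>
  proof -
    have "lexr_has_cex learner target eps delta (xs @- \<omega>) j
        = lexr_has_cex learner target eps delta (xs @- sconst undefined) j" if "j < k" for j
      using that suite_offset_mono[of "Suc j" k eps delta]
      by (intro lexr_has_cex_cong_stake[of ?n]) (simp_all add: prefix)
    then show ?thesis
      unfolding earlier_cex_def by auto
  qed
  have current: "lexr_has_cex learner target eps delta (xs @- \<omega>) k \<longleftrightarrow> set (stake ?r \<omega>) \<inter> A \<noteq> {}" for \<omega>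
    using 1 by (auto simp: lexr_has_cex_def hyp test_suite_shift is_cex_def A_def)
  have "emeasure ?S {\<omega>. earlier_cex \<and> set (stake ?r \<omega>) \<inter> A = {} \<and> eps \<le> measure_pmf.prob D A}
      \<le> ennreal (delta / 2 ^ Suc k)"
  proof (cases "earlier_cex \<and> eps \<le> measure_pmf.prob D A")
    case True
    then have "emeasure ?S {\<omega>. earlier_cex \<and> set (stake ?r \<omega>) \<inter> A = {} \<and> eps \<le> measure_pmf.prob D A}
        \<le> ennreal ((1 - eps) ^ ?r)"
      by (simp add: emeasure_stream_space_pmf_stake_avoids_le)
    also have "\<dots> \<le> ennreal (delta / 2 ^ Suc k)"
      using assms by (intro ennreal_leI one_minus_eps_pow_test_size_le)
    finally show ?thesis .
  next
    case False
    then show ?thesis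
      by auto
  qed
  then show ?case
    unfolding lexr_returns_at_def earlier current hyp A_def[symmetric] by simp
qed

theorem mainTheorem1:
  fixes D :: "'a::finite list pmf"
    and g :: "real^'d \<Rightarrow> 'a \<Rightarrow> real^'d" and sI :: "real^'d" and f :: "real^'d \<Rightarrow> bool"
    and \<psi> :: "'a ltl"
    and learner :: "('a list \<times> bool) set \<Rightarrow> 'a ltl"
    and eps delta :: real
  assumes eps: "0 < eps" "eps < 1"
    and delta: "0 < delta" "delta < 1"
    and learner: "\<And>S. finite S \<Longrightarrow>
        (\<forall>(u, b) \<in> S. b = (u \<in> rnn_lang g sI f \<inter> lang \<psi>)) \<Longrightarrow> consistent (learner S) S"
  shows "{\<omega> \<in> space (stream_space (measure_pmf D)).
            \<exists>\<phi>. lexr_returns learner (rnn_lang g sI f \<inter> lang \<psi>) eps delta \<omega> \<phi> \<and>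
                 \<not> is_eps_explanation D eps (rnn_lang g sI f) \<psi> \<phi>}
           \<in> sets (stream_space (measure_pmf D))
       \<and> measure (stream_space (measure_pmf D))
           {\<omega> \<in> space (stream_space (measure_pmf D)).
            \<exists>\<phi>. lexr_returns learner (rnn_lang g sI f \<inter> lang \<psi>) eps delta \<omega> \<phi> \<and>
                 \<not> is_eps_explanation D eps (rnn_lang g sI f) \<psi> \<phi>} \<le> delta"
proof -
  let ?S = "stream_space (measure_pmf D)"
  define T where "T = rnn_lang g sI f \<inter> lang \<psi>"
  define bad_return_at where "bad_return_at k =
    {\<omega>. lexr_returns_at learner T eps delta \<omega> k \<and>
         eps \<le> measure_pmf.prob D (symdiff (lang (lexr_hyp learner T eps delta \<omega> k)) T)}" for k
  have bad_returns: "{\<omega> \<in> space ?S. \<exists>\<phi>. lexr_returns learner T eps delta \<omega> \<phi> \<and>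
                       \<not> is_eps_explanation D eps (rnn_lang g sI f) \<psi> \<phi>} = (\<Union>k. bad_return_at k)"
    by (auto simp: bad_return_at_def lexr_returns_iff is_eps_explanation_def T_def not_less)
  have sets: "range bad_return_at \<subseteq> sets ?S"
    unfolding bad_return_at_def
    using sets_lexr_returns_at[where Q = "\<lambda>\<phi>. eps \<le> measure_pmf.prob D (symdiff (lang \<phi>) T)"]
    by blast
  interpret prob_space ?S
    by (rule prob_space.prob_space_stream_space[OF prob_space_measure_pmf])
  have "emeasure ?S (\<Union>k. bad_return_at k) \<le> ennreal delta"
    using sets delta eps unfolding bad_return_at_def
    by (intro emeasure_UN_le_geometric emeasure_lexr_returns_at_bad_hyp_le) auto
  then show ?thesis
    using sets delta unfolding bad_returns[unfolded T_def]
    by (auto simp: emeasure_eq_measure)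
qed

end
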